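(* Every graph $G$ (with at least one vertex) of sd-degeneracy at most $d$ admits a clean signed tree model of width at most $d+1$.
   Context: sd-degeneracy: for distinct vertices $u,v$ let $\mathrm{sd}_G(u,v) := |(N_G(u)\setminus\{v\}) \triangle (N_G(v)\setminus\{u\})|$; $\mathrm{sdd}(G)$ is the smallest $d\ge 0$ such that $|V(G)|=1$ or there are distinct $u,v$ with $\mathrm{sd}_G(u,v)\le d$ and $\mathrm{sdd}(G-v)\le d$. Tree notation: for a rooted tree $T$, $u\prec_T u'$ means $u$ is a strict ancestor of $u'$, and $u\preceq_T u'$ means $u=u'$ or $u\prec_T u'$. For unordered pairs, $uv\preceq_T u'v'$ means ($u\preceq_T u'$ and $v\preceq_T v'$) or ($v\preceq_T u'$ and $u\preceq_T v'$); $uv\prec_T u'v'$ means $uv\preceq_T u'v'$ and $\{u,v\}\neq\{u',v'\}$. A rooted binary tree is full if every non-leaf node has exactly two children. A transversal pair of $T$ is an unordered pair of distinct nodes neither of which is an ancestor of the other. Two transversal pairs $\{u,v\},\{u',v'\}$ cross if their endpoints can be named $\{a,b\}=\{u,v\}$, $\{a',b'\}=\{u',v'\}$ so that $a\prec_T a'$ and $b'\prec_T b$. A signed tree model is a triple $(T,A(T),B(T))$ where $T$ is a full rooted binary tree, and $A(T)$ (green edges / transversal anti-edges) and $B(T)$ (blue edges / transversal edges) are disjoint sets of transversal pairs of $T$ such that no two pairs in $A(T)\cup B(T)$ cross. It defines the graph $G_{\mathcal T}$ with vertex set the set $L(T)$ of leaves of $T$, where distinct leaves $u,v$ are adjacent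 iff there is $u'v'\in B(T)$ with $u'v'\preceq_T uv$ and there is no $u''v''\in A(T)$ with $u'v'\prec_T u''v''\preceq_T uv$. A graph $G$ admits the model if $G$ is (isomorphic to) $G_{\mathcal T}$ via a bijection between $V(G)$ and $L(T)$. The width of the model is the degeneracy of the graph $(V(T),A(T)\cup B(T))$. The model is clean if every pair of sibling nodes of $T$ belongs to $A(T)\cup B(T)$. *)

theory Defs
  imports Main
begin

definition graph :: "'a set \<Rightarrow> ('a \<Rightarrow> 'a \<Rightarrow> bool) \<Rightarrow> bool" where
  "graph V E \<longleftrightarrow> finite V \<and> (\<forall>x y. E x y \<longrightarrow> x \<in> V \<and> y \<in> V)
     \<and> (\<forall>x y. E x y \<longrightarrow> E y x) \<and> (\<forall>x. \<not> E x x)"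

definition nbhd :: "'a set \<Rightarrow> ('a \<Rightarrow> 'a \<Rightarrow> bool) \<Rightarrow> 'a \<Rightarrow> 'a set" where
  "nbhd V E u = {w \<in> V. E u w}"

definition sd :: "'a set \<Rightarrow> ('a \<Rightarrow> 'a \<Rightarrow> bool) \<Rightarrow> 'a \<Rightarrow> 'a \<Rightarrow> nat" where
  "sd V E u v = card (((nbhd V E u - {v}) - (nbhd V E v - {u}))
                    \<union> ((nbhd V E v - {u}) - (nbhd V E u - {v})))"

text \<open>sdd_le V E d means sdd(G) \<le> d for the induced graph G on V (edges E restricted to V).
  Since the defining condition is monotone in d, sdd(G) \<le> d holds iff |V| = 1 or
  there are distinct u, v with sd(u,v) \<le> d and sdd(G - v) \<le> d.\<close>
inductive sdd_le :: "'a set \<Rightarrow> ('a \<Rightarrow> 'a \<Rightarrow> bool) \<Rightarrow> nat \<Rightarrow> bool" where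
  single: "card V = 1 \<Longrightarrow> sdd_le V E d"
| step: "\<lbrakk>u \<in> V; v \<in> V; u \<noteq> v; sd V E u v \<le> d; sdd_le (V - {v}) E d\<rbrakk>
           \<Longrightarrow> sdd_le V E d"

definition full_binary_tree :: "bool list set \<Rightarrow> bool" where
  "full_binary_tree N \<longleftrightarrow> finite N \<and> [] \<in> N
     \<and> (\<forall>p b. p @ [b] \<in> N \<longrightarrow> p \<in> N)
     \<and> (\<forall>p. p @ [True] \<in> N \<longleftrightarrow> p @ [False] \<in> N)"

definition leaves :: "bool list set \<Rightarrow> bool list set" where
  "leaves N = {p \<in> N. p @ [False] \<notin> N}"

definition anc :: "bool list \<Rightarrow> bool list \<Rightarrow> bool" where
  "anc u u' \<longleftrightarrow> (\<exists>w. w \<noteq> [] \<and> u' = u @ w)"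

definition anc_eq :: "bool list \<Rightarrow> bool list \<Rightarrow> bool" where
  "anc_eq u u' \<longleftrightarrow> u = u' \<or> anc u u'"

text \<open>Unordered pairs are represented as sets.\<close>
definition pair_le :: "bool list set \<Rightarrow> bool list set \<Rightarrow> bool" where
  "pair_le P Q \<longleftrightarrow> (\<exists>u v u' v'. P = {u, v} \<and> Q = {u', v'} \<and> anc_eq u u' \<and> anc_eq v v')"

definition pair_lt :: "bool list set \<Rightarrow> bool list set \<Rightarrow> bool" where
  "pair_lt P Q \<longleftrightarrow> pair_le P Q \<and> P \<noteq> Q"

definition transversal :: "bool list set \<Rightarrow> bool list set \<Rightarrow> bool" where
  "transversal N P \<longleftrightarrow> (\<exists>u v. P = {u, v} \<and> u \<in> N \<and> v \<in> N \<and> u \<noteq> v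
      \<and> \<not> anc u v \<and> \<not> anc v u)"

definition cross :: "bool list set \<Rightarrow> bool list set \<Rightarrow> bool" where
  "cross P Q \<longleftrightarrow> (\<exists>a b a' b'. P = {a, b} \<and> Q = {a', b'} \<and> anc a a' \<and> anc b' b)"

definition signed_tree_model :: "bool list set \<Rightarrow> bool list set set \<Rightarrow> bool list set set \<Rightarrow> bool" where
  "signed_tree_model N A B \<longleftrightarrow> full_binary_tree N
     \<and> (\<forall>P \<in> A \<union> B. transversal N P) \<and> A \<inter> B = {}
     \<and> (\<forall>P \<in> A \<union> B. \<forall>Q \<in> A \<union> B. \<not> cross P Q)"

definition model_adj :: "bool list set set \<Rightarrow> bool list set set \<Rightarrow> bool list \<Rightarrow> bool list \<Rightarrow> bool" where
  "model_adj A B x y \<longleftrightarrow> x \<noteq> y \<and> (\<exists>P \<in> B. pair_le P {x, y}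
      \<and> \<not> (\<exists>Q \<in> A. pair_lt P Q \<and> pair_le Q {x, y}))"

definition degeneracy_le :: "'b set \<Rightarrow> 'b set set \<Rightarrow> nat \<Rightarrow> bool" where
  "degeneracy_le Vs Es k \<longleftrightarrow> (\<forall>S \<subseteq> Vs. S \<noteq> {} \<longrightarrow>
      (\<exists>x \<in> S. card {y \<in> S. y \<noteq> x \<and> {x, y} \<in> Es} \<le> k))"

definition clean :: "bool list set \<Rightarrow> bool list set set \<Rightarrow> bool list set set \<Rightarrow> bool" where
  "clean N A B \<longleftrightarrow> (\<forall>p. p @ [False] \<in> N \<longrightarrow> {p @ [False], p @ [True]} \<in> A \<union> B)"

definition admits_model :: "'a set \<Rightarrow> ('a \<Rightarrow> 'a \<Rightarrow> bool) \<Rightarrow> bool list set \<Rightarrow> bool list set set \<Rightarrow> bool list set set \<Rightarrow> bool" where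
  "admits_model V E N A B \<longleftrightarrow> (\<exists>f. bij_betw f V (leaves N)
      \<and> (\<forall>x \<in> V. \<forall>y \<in> V. x \<noteq> y \<longrightarrow> (E x y \<longleftrightarrow> model_adj A B (f x) (f y))))"

end

theory Submission
  imports Defs
begin

text \<open>Induction along the sd-elimination order. If sd(u, v) \<le> d and G - v has a clean model
  of width at most d + 1, split the leaf of u into two children, one for u and one for v. With
  respect to the old pairs both children behave like their parent, so v starts out with exactly
  the adjacencies of u. It then suffices to add, at v's leaf, one pair towards u and one towards
  each of the at most d vertices adjacent to exactly one of u and v, coloured by the actual
  adjacency. These new pairs join leaves, so they cross nothing; the pair towards u is the new
  sibling pair, and only v's leaf gains pairs, at most d + 1 of them.\<close>

lemma anc_eq_iff: "anc_eq u u' \<longleftrightarrow> (\<exists>w. u' = u @ w)"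
  by (auto simp: anc_eq_def anc_def)

lemma anc_eq_refl [simp]: "anc_eq u u"
  by (simp add: anc_eq_iff)

lemma anc_eq_trans: "anc_eq u v \<Longrightarrow> anc_eq v w \<Longrightarrow> anc_eq u w"
  by (auto simp: anc_eq_iff)

lemma anc_eq_antisym: "anc_eq u v \<Longrightarrow> anc_eq v u \<Longrightarrow> u = v"
  by (auto simp: anc_eq_iff)

lemma anc_eq_snoc: "anc_eq u (p @ [b]) \<longleftrightarrow> u = p @ [b] \<or> anc_eq u p"
  by (auto simp: anc_eq_iff append_eq_append_conv2 append_eq_Cons_conv Cons_eq_append_conv)

lemma pair_le_doubleton_iff:
  "pair_le {a, b} {a', b'} \<longleftrightarrow> anc_eq a a' \<and> anc_eq b b' \<or> anc_eq b a' \<and> anc_eq a b'"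
  unfolding pair_le_def by (auto simp: doubleton_eq_iff)

lemma pair_le_refl: "pair_le {a, b} {a, b}"
  by (simp add: pair_le_doubleton_iff)

lemma pair_le_antisym: "pair_le {a, b} {a', b'} \<Longrightarrow> pair_le {a', b'} {a, b} \<Longrightarrow> {a, b} = {a', b'}"
  unfolding pair_le_doubleton_iff
  by (elim disjE conjE)
    (metis anc_eq_antisym, metis anc_eq_antisym anc_eq_trans,
     metis anc_eq_antisym anc_eq_trans, metis anc_eq_antisym insert_commute)

lemma full_binary_tree_prefix: "full_binary_tree N \<Longrightarrow> p @ w \<in> N \<Longrightarrow> p \<in> N"
proof (induction w rule: rev_induct)
  case (snoc b w)
  then show ?case unfolding full_binary_tree_def by (metis append_assoc)
qed simp

lemma leaves_subset: "leaves N \<subseteq> N"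
  by (auto simp: leaves_def)

lemma leaf_not_anc: "full_binary_tree N \<Longrightarrow> a \<in> leaves N \<Longrightarrow> a' \<in> N \<Longrightarrow> \<not> anc a a'"
proof
  assume tree: "full_binary_tree N" and "a \<in> leaves N" "a' \<in> N" "anc a a'"
  then obtain b w where "a' = (a @ [b]) @ w" by (auto simp: anc_def neq_Nil_conv)
  then have "a @ [b] \<in> N" using full_binary_tree_prefix[OF tree] \<open>a' \<in> N\<close> by blast
  then have "a @ [False] \<in> N" using tree unfolding full_binary_tree_def by (cases b) auto
  then show False using \<open>a \<in> leaves N\<close> by (simp add: leaves_def)
qed

lemma leaf_anc_eq: "full_binary_tree N \<Longrightarrow> a \<in> leaves N \<Longrightarrow> a' \<in> N \<Longrightarrow> anc_eq a a' \<Longrightarrow> a = a'"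
  using leaf_not_anc by (auto simp: anc_eq_def)

lemma child_of_leaf_notin: "full_binary_tree N \<Longrightarrow> p \<in> leaves N \<Longrightarrow> p @ [b] \<notin> N"
  by (cases b) (auto simp: leaves_def full_binary_tree_def)

lemma pair_le_leaves_eq:
  assumes "full_binary_tree N" "a \<in> leaves N" "b \<in> leaves N" "a' \<in> N" "b' \<in> N"
    and "pair_le {a, b} {a', b'}"
  shows "{a, b} = {a', b'}"
proof -
  have "a = a'" if "anc_eq a a'" and "a \<in> leaves N" "a' \<in> N" for a a'
    using leaf_anc_eq[OF assms(1)] that by blast
  then show ?thesis
    using assms(2-6) unfolding pair_le_doubleton_iff by (auto simp: insert_commute)
qed

lemma transversal_leaves:
  "full_binary_tree N \<Longrightarrow> a \<in> leaves N \<Longrightarrow> b \<in> leaves N \<Longrightarrow> a \<noteq> b \<Longrightarrow> transversal N {a, b}"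
  using leaf_not_anc[of N a b] leaf_not_anc[of N b a] leaves_subset unfolding transversal_def
  by blast

lemma model_adj_commute: "model_adj A B a b = model_adj A B b a"
  by (auto simp: model_adj_def insert_commute)

lemma model_adj_if_blue:
  assumes "{a, b} \<in> B" "a \<noteq> b"
  shows "model_adj A B a b"
  unfolding model_adj_def
proof (intro conjI bexI[of _ "{a, b}"] notI)
  assume "\<exists>Q \<in> A. pair_lt {a, b} Q \<and> pair_le Q {a, b}"
  then obtain Q where Q: "pair_lt {a, b} Q" "pair_le Q {a, b}" by blast
  moreover from Q(2) obtain c e where "Q = {c, e}" unfolding pair_le_def by blast
  ultimately show False using pair_le_antisym[of a b c e] unfolding pair_lt_def by blast
qed (use assms pair_le_refl in auto)

lemma not_model_adj_if_green: "{a, b} \<in> A \<Longrightarrow> A \<inter> B = {} \<Longrightarrow> \<not> model_adj A B a b"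
  unfolding model_adj_def pair_lt_def using pair_le_refl by blast

lemma model_adj_cong:
  assumes "x \<noteq> y" "x' \<noteq> y'"
    and "\<And>P. P \<in> B \<and> pair_le P {x, y} \<longleftrightarrow> P \<in> B' \<and> pair_le P {x', y'}"
    and "\<And>P. P \<in> A \<and> pair_le P {x, y} \<longleftrightarrow> P \<in> A' \<and> pair_le P {x', y'}"
  shows "model_adj A B x y = model_adj A' B' x' y'"
  using assms unfolding model_adj_def by blast

definition star_pairs :: "'a \<Rightarrow> 'a set \<Rightarrow> 'a set set" where
  "star_pairs r C = (\<lambda>c. {r, c}) ` C"

lemma star_pairs_Un: "star_pairs r (C \<union> C') = star_pairs r C \<union> star_pairs r C'"
  by (simp add: star_pairs_def image_Un)

lemma star_pairs_contains_center: "P \<in> star_pairs r C \<Longrightarrow> r \<in> P"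
  by (auto simp: star_pairs_def)

lemma doubleton_in_star_pairs: "y \<noteq> r \<Longrightarrow> {r, y} \<in> star_pairs r C \<longleftrightarrow> y \<in> C"
  by (auto simp: star_pairs_def doubleton_eq_iff)

locale leaf_split =
  fixes N :: "bool list set" and A B :: "bool list set set" and p :: "bool list"
    and CA CB :: "bool list set"
  assumes model: "signed_tree_model N A B"
    and leaf: "p \<in> leaves N"
    and new_disjoint: "CA \<inter> CB = {}"
    and left_child_new: "p @ [False] \<in> CA \<union> CB"
    and new_subset: "CA \<union> CB \<subseteq> insert (p @ [False]) (leaves N - {p})"
begin

abbreviation L :: "bool list" where "L \<equiv> p @ [False]"
abbreviation R :: "bool list" where "R \<equiv> p @ [True]"

definition N' :: "bool list set" where "N' = N \<union> {L, R}"
definition A' :: "bool list set set" where "A' = A \<union> star_pairs R CA"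
definition B' :: "bool list set set" where "B' = B \<union> star_pairs R CB"

lemma tree: "full_binary_tree N"
  using model by (simp add: signed_tree_model_def)

lemma p_in_N: "p \<in> N"
  using leaf leaves_subset by blast

lemma children_notin_N: "L \<notin> N" "R \<notin> N"
  using child_of_leaf_notin[OF tree leaf] by auto

lemma old_pair_subset: "P \<in> A \<union> B \<Longrightarrow> \<exists>a b. P = {a, b} \<and> a \<in> N \<and> b \<in> N"
  using model unfolding signed_tree_model_def transversal_def by blast

lemma full_binary_tree_N': "full_binary_tree N'"
proof -
  have child: "q @ [b] \<in> N' \<longleftrightarrow> q @ [b] \<in> N \<or> q = p" for q b
    by (cases b) (auto simp: N'_def)
  show ?thesis
    using tree p_in_N unfolding full_binary_tree_def child by (auto simp: N'_def)
qed

lemma leaves_N': "leaves N' = insert L (insert R (leaves N - {p}))"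
  using p_in_N children_notin_N full_binary_tree_prefix[OF tree]
  by (auto simp: leaves_def N'_def)

lemma R_leaf: "R \<in> leaves N'"
  by (simp add: leaves_N')

lemma new_endpoints: "CA \<union> CB \<subseteq> leaves N' - {R}"
  using new_subset children_notin_N leaves_subset by (auto simp: leaves_N')

lemma new_pair_form: "P \<in> star_pairs R (CA \<union> CB) \<Longrightarrow> \<exists>c \<in> leaves N'. c \<noteq> R \<and> P = {R, c}"
  using new_endpoints by (auto simp: star_pairs_def)

lemma new_pair_subset_leaves: "P \<in> star_pairs R (CA \<union> CB) \<Longrightarrow> P \<subseteq> leaves N'"
  using new_endpoints R_leaf by (auto simp: star_pairs_def)

lemma pairs_split: "A' \<union> B' = (A \<union> B) \<union> star_pairs R (CA \<union> CB)"
  by (auto simp: A'_def B'_def star_pairs_def)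

lemma signed_tree_model_split: "signed_tree_model N' A' B'"
  unfolding signed_tree_model_def
proof (intro conjI ballI)
  show "full_binary_tree N'" by (fact full_binary_tree_N')
next
  fix P assume "P \<in> A' \<union> B'"
  then consider "P \<in> A \<union> B" | "P \<in> star_pairs R (CA \<union> CB)" by (auto simp: pairs_split)
  then show "transversal N' P"
  proof cases
    case 1
    then show ?thesis using model unfolding signed_tree_model_def transversal_def N'_def by blast
  next
    case 2
    then show ?thesis using new_pair_form full_binary_tree_N' R_leaf transversal_leaves by blast
  qed
next
  have "A \<inter> star_pairs R CB = {}" "star_pairs R CA \<inter> B = {}"
    using old_pair_subset children_notin_N by (fastforce simp: star_pairs_def doubleton_eq_iff)+
  moreover have "star_pairs R CA \<inter> star_pairs R CB = {}"
    using new_disjoint new_endpoints by (fastforce simp: star_pairs_def doubleton_eq_iff)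
  ultimately show "A' \<inter> B' = {}"
    using model by (auto simp: signed_tree_model_def A'_def B'_def)
next
  fix P Q assume P: "P \<in> A' \<union> B'" and Q: "Q \<in> A' \<union> B'"
  show "\<not> cross P Q"
  proof
    assume "cross P Q"
    then obtain a b a' b' where ab: "P = {a, b}" "Q = {a', b'}" "anc a a'" "anc b' b"
      unfolding cross_def by blast
    have leaf_not_anc': "\<And>c c'. c \<in> leaves N' \<Longrightarrow> c' \<in> N' \<Longrightarrow> \<not> anc c c'"
      using leaf_not_anc[OF full_binary_tree_N'] .
    have in_N': "P \<subseteq> N'" "Q \<subseteq> N'"
      using P Q old_pair_subset new_pair_subset_leaves leaves_subset
      unfolding pairs_split N'_def by blast+
    consider "P \<in> star_pairs R (CA \<union> CB)" | "Q \<in> star_pairs R (CA \<union> CB)"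
      | "P \<in> A \<union> B" "Q \<in> A \<union> B"
      using P Q unfolding pairs_split by blast
    then show False
    proof cases
      case 1
      then have "a \<in> leaves N'" using ab new_pair_subset_leaves by blast
      then show False using leaf_not_anc' in_N' ab by blast
    next
      case 2
      then have "b' \<in> leaves N'" using ab new_pair_subset_leaves by blast
      then show False using leaf_not_anc' in_N' ab by blast
    next
      case 3
      then show False using model \<open>cross P Q\<close> by (auto simp: signed_tree_model_def)
    qed
  qed
qed

lemma clean_split: "clean N A B \<Longrightarrow> clean N' A' B'"
  unfolding clean_def
proof (intro allI impI)
  fix q assume clean: "\<forall>q. q @ [False] \<in> N \<longrightarrow> {q @ [False], q @ [True]} \<in> A \<union> B"
    and "q @ [False] \<in> N'"
  show "{q @ [False], q @ [True]} \<in> A' \<union> B'"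
  proof (cases "q = p")
    case True
    then show ?thesis using left_child_new by (auto simp: pairs_split star_pairs_def insert_commute)
  next
    case False
    then have "q @ [False] \<in> N" using \<open>q @ [False] \<in> N'\<close> by (auto simp: N'_def)
    then show ?thesis using clean by (auto simp: pairs_split)
  qed
qed

lemma new_pair_if_outside_N: "x \<notin> N \<Longrightarrow> {x, y} \<in> A' \<union> B' \<Longrightarrow> {x, y} \<in> star_pairs R (CA \<union> CB)"
  using old_pair_subset unfolding pairs_split by (metis UnE doubleton_eq_iff)

lemma degeneracy_split:
  assumes "degeneracy_le N (A \<union> B) k" and "card (CA \<union> CB) \<le> k"
  shows "degeneracy_le N' (A' \<union> B') k"
  unfolding degeneracy_le_def
proof (intro allI impI)
  fix S assume S: "S \<subseteq> N'" "S \<noteq> {}"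
  let ?nbrs = "\<lambda>x. {y \<in> S. y \<noteq> x \<and> {x, y} \<in> A' \<union> B'}"
  consider "R \<in> S" | "R \<notin> S" "L \<in> S" | "S \<subseteq> N"
    using S unfolding N'_def by blast
  then show "\<exists>x \<in> S. card (?nbrs x) \<le> k"
  proof cases
    case 1
    have nbrs: "?nbrs R \<subseteq> CA \<union> CB"
    proof
      fix y assume y: "y \<in> ?nbrs R"
      then have "{R, y} \<in> A' \<union> B'" by simp
      then have "{R, y} \<in> star_pairs R (CA \<union> CB)"
        by (rule new_pair_if_outside_N[OF children_notin_N(2)])
      moreover from y have "y \<noteq> R" by simp
      ultimately show "y \<in> CA \<union> CB" by (simp add: doubleton_in_star_pairs)
    qed
    have "finite (CA \<union> CB)"
    proof (rule finite_subset)
      show "CA \<union> CB \<subseteq> N'" using new_endpoints leaves_subset by blast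
      show "finite N'" using full_binary_tree_N' by (simp add: full_binary_tree_def)
    qed
    then have "card (?nbrs R) \<le> card (CA \<union> CB)" using nbrs by (rule card_mono)
    then have "card (?nbrs R) \<le> k" using assms(2) by linarith
    then show ?thesis using 1 by blast
  next
    case 2
    have "?nbrs L = {}"
    proof (rule equals0I)
      fix y assume y: "y \<in> ?nbrs L"
      then have "{L, y} \<in> A' \<union> B'" by simp
      then have "{L, y} \<in> star_pairs R (CA \<union> CB)"
        by (rule new_pair_if_outside_N[OF children_notin_N(1)])
      then have "R \<in> {L, y}" by (rule star_pairs_contains_center)
      then show False using y 2 by auto
    qed
    then have "card (?nbrs L) \<le> k" by (metis card.empty le0)
    then show ?thesis using 2 by blast
  next
    case 3
    then obtain x where "x \<in> S" and x: "card {y \<in> S. y \<noteq> x \<and> {x, y} \<in> A \<union> B} \<le> k"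
      using assms(1) S unfolding degeneracy_le_def by blast
    have "{x, y} \<in> A' \<union> B' \<longleftrightarrow> {x, y} \<in> A \<union> B" if "y \<in> S" for y
      using star_pairs_contains_center[of "{x, y}" R "CA \<union> CB"] children_notin_N 3 \<open>x \<in> S\<close> that
      unfolding pairs_split by blast
    then have "?nbrs x = {y \<in> S. y \<noteq> x \<and> {x, y} \<in> A \<union> B}"
      by blast
    with x have "card (?nbrs x) \<le> k" by (simp only:)
    with \<open>x \<in> S\<close> show ?thesis by blast
  qed
qed

lemma model_adj_new_blue: "c \<in> CB \<Longrightarrow> model_adj A' B' R c"
  using new_endpoints by (intro model_adj_if_blue) (auto simp: B'_def star_pairs_def)

lemma not_model_adj_new_green: "c \<in> CA \<Longrightarrow> \<not> model_adj A' B' R c"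
  using signed_tree_model_split
  by (intro not_model_adj_if_green) (auto simp: A'_def star_pairs_def signed_tree_model_def)

text \<open>Every old pair below a pair of leaves of the split tree is also below its image under
  \<open>unsplit\<close>, and no new pair is below any other leaf pair; hence the adjacency of leaves not
  joined by a new pair is inherited from the old model.\<close>

definition unsplit :: "bool list \<Rightarrow> bool list" where
  "unsplit x = (if x = L \<or> x = R then p else x)"

lemma anc_eq_unsplit: "c \<in> N \<Longrightarrow> anc_eq c x = anc_eq c (unsplit x)"
  using children_notin_N by (auto simp: unsplit_def anc_eq_snoc)

lemma unsplit_eq_iff:
  assumes "x \<in> leaves N'" "y \<in> leaves N'"
  shows "unsplit x = unsplit y \<longleftrightarrow> x = y \<or> {x, y} = {L, R}"
proof -
  have other: "unsplit z = z" "z \<noteq> p" if "z \<in> leaves N'" "z \<notin> {L, R}" for z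
    using that unfolding leaves_N' unsplit_def by auto
  have children: "unsplit z = p" if "z \<in> {L, R}" for z
    using that unfolding unsplit_def by auto
  show ?thesis
  proof (cases "x \<in> {L, R}"; cases "y \<in> {L, R}")
    assume "x \<in> {L, R}" "y \<in> {L, R}"
    then show ?thesis using children by auto
  next
    assume "x \<in> {L, R}" "y \<notin> {L, R}"
    then show ?thesis using children other[OF assms(2)] by auto
  next
    assume "x \<notin> {L, R}" "y \<in> {L, R}"
    then show ?thesis using children other[OF assms(1)] by auto
  next
    assume "x \<notin> {L, R}" "y \<notin> {L, R}"
    then show ?thesis using other assms by auto
  qed
qed

lemma model_adj_split_inherited:
  assumes x: "x \<in> leaves N'" and y: "y \<in> leaves N'" and "x \<noteq> y"
    and not_new: "{x, y} \<notin> star_pairs R (CA \<union> CB)"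
  shows "model_adj A' B' x y = model_adj A B (unsplit x) (unsplit y)"
proof (rule model_adj_cong)
  show "x \<noteq> y" by fact
  have "{R, L} \<in> star_pairs R (CA \<union> CB)"
    using doubleton_in_star_pairs[of L R] left_child_new by simp
  then have "{x, y} \<noteq> {L, R}"
    using not_new by (metis insert_commute)
  then show "unsplit x \<noteq> unsplit y"
    using x y \<open>x \<noteq> y\<close> unsplit_eq_iff by blast
  have old: "pair_le P {x, y} = pair_le P {unsplit x, unsplit y}" if P: "P \<in> A \<union> B" for P
  proof -
    obtain a b where "P = {a, b}" "a \<in> N" "b \<in> N" using old_pair_subset[OF P] by blast
    then show ?thesis
      by (simp add: pair_le_doubleton_iff anc_eq_unsplit[of a x] anc_eq_unsplit[of a y]
          anc_eq_unsplit[of b x] anc_eq_unsplit[of b y])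
  qed
  have new: "\<not> pair_le P {x, y}" if new: "P \<in> star_pairs R (CA \<union> CB)" for P
  proof
    assume "pair_le P {x, y}"
    obtain c where c: "c \<in> leaves N'" and P: "P = {R, c}"
      using new_pair_form[OF new] by blast
    have "x \<in> N'" "y \<in> N'" using x y leaves_subset by blast+
    then have "P = {x, y}"
      using pair_le_leaves_eq[OF full_binary_tree_N' R_leaf c] \<open>pair_le P {x, y}\<close> P by simp
    then show False using new not_new by simp
  qed
  show "P \<in> B' \<and> pair_le P {x, y} \<longleftrightarrow> P \<in> B \<and> pair_le P {unsplit x, unsplit y}" for P
    using old new unfolding B'_def star_pairs_Un by blast
  show "P \<in> A' \<and> pair_le P {x, y} \<longleftrightarrow> P \<in> A \<and> pair_le P {unsplit x, unsplit y}" for P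
    using old new unfolding A'_def star_pairs_Un by blast
qed

end

lemma bij_betw_fun_upd_insert:
  assumes "bij_betw f A B" "x \<notin> A" "y \<notin> B"
  shows "bij_betw (f(x := y)) (insert x A) (insert y B)"
proof -
  have "bij_betw (f(x := y)) A B = bij_betw f A B"
    by (rule bij_betw_cong) (use assms(2) in auto)
  with assms(1) have "bij_betw (f(x := y)) A B" by simp
  moreover have "bij_betw (f(x := y)) {x} {y}" by simp
  ultimately have "bij_betw (f(x := y)) (A \<union> {x}) (B \<union> {y})"
    using assms(3) by (intro bij_betw_combine) auto
  then show ?thesis by simp
qed

lemma bij_betw_fun_upd_split:
  assumes f: "bij_betw f (V - {v}) X" and "u \<in> V - {v}" "v \<in> V" "a \<notin> X" "b \<notin> X" "a \<noteq> b"
  shows "bij_betw (f(u := a, v := b)) V (insert a (insert b (X - {f u})))"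
proof -
  have "bij_betw f (V - {v} - {u}) (X - {f u})"
    using assms(2) by (intro bij_betw_DiffI[OF f]) (auto simp: bij_betwE[OF f])
  then have "bij_betw (f(u := a)) (insert u (V - {v} - {u})) (insert a (X - {f u}))"
    by (rule bij_betw_fun_upd_insert) (use assms(4) in auto)
  then have "bij_betw (f(u := a, v := b)) (insert v (insert u (V - {v} - {u})))
      (insert b (insert a (X - {f u})))"
    by (rule bij_betw_fun_upd_insert) (use assms(2,5,6) in auto)
  moreover have "insert v (insert u (V - {v} - {u})) = V" using assms(2,3) by auto
  ultimately show ?thesis by (simp add: insert_commute)
qed

locale vertex_split =
  fixes V :: "'a set" and E :: "'a \<Rightarrow> 'a \<Rightarrow> bool" and u v :: 'a
    and N :: "bool list set" and A B :: "bool list set set" and f :: "'a \<Rightarrow> bool list"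
  assumes sym: "\<And>x y. E x y \<Longrightarrow> E y x" and irrefl: "\<And>x. \<not> E x x"
    and u: "u \<in> V" and v: "v \<in> V" and uv: "u \<noteq> v"
    and old_model: "signed_tree_model N A B"
    and f_bij: "bij_betw f (V - {v}) (leaves N)"
    and f_adj: "\<And>x y. x \<in> V - {v} \<Longrightarrow> y \<in> V - {v} \<Longrightarrow> x \<noteq> y \<Longrightarrow>
      E x y \<longleftrightarrow> model_adj A B (f x) (f y)"
begin

definition D :: "'a set" where
  "D = ((nbhd V E u - {v}) - (nbhd V E v - {u})) \<union> ((nbhd V E v - {u}) - (nbhd V E u - {v}))"

text \<open>For w outside W the pair {v, w} behaves like {u, w}, so only the pairs {v, w} with
  w \<in> W get a pair of their own in the new model.\<close>

definition W :: "'a set" where "W = insert u D"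

definition g :: "'a \<Rightarrow> bool list" where
  "g = f(u := f u @ [False], v := f u @ [True])"

definition CA :: "bool list set" where "CA = g ` {w \<in> W. \<not> E v w}"
definition CB :: "bool list set" where "CB = g ` {w \<in> W. E v w}"

lemma D_iff: "w \<in> V - {u, v} \<Longrightarrow> w \<in> D \<longleftrightarrow> E u w \<noteq> E v w"
  by (auto simp: D_def nbhd_def)

lemma W_subset: "W \<subseteq> V - {v}"
  using u uv irrefl by (auto simp: W_def D_def nbhd_def)

lemma old_tree: "full_binary_tree N"
  using old_model by (simp add: signed_tree_model_def)

lemma finite_V: "finite V"
proof -
  have "finite N" using old_tree by (simp add: full_binary_tree_def)
  then have "finite (leaves N)" using leaves_subset finite_subset by blast
  then show ?thesis using bij_betw_finite[OF f_bij] by simp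
qed

lemma card_W: "card W \<le> sd V E u v + 1"
proof -
  have "finite D" using W_subset finite_V finite_subset by (auto simp: W_def)
  then show ?thesis by (simp add: W_def sd_def D_def[symmetric] card_insert_if)
qed

lemma f_leaf: "x \<in> V - {v} \<Longrightarrow> f x \<in> leaves N"
  using f_bij by (auto simp: bij_betw_def)

lemma f_eq_iff: "x \<in> V - {v} \<Longrightarrow> y \<in> V - {v} \<Longrightarrow> f x = f y \<longleftrightarrow> x = y"
  using f_bij by (auto simp: bij_betw_def inj_on_eq_iff)

lemma f_u_leaf: "f u \<in> leaves N"
  using f_leaf u uv by blast

lemma g_simps [simp]: "g u = f u @ [False]" "g v = f u @ [True]" "x \<noteq> u \<Longrightarrow> x \<noteq> v \<Longrightarrow> g x = f x"
  using uv by (auto simp: g_def)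

lemma g_bij: "bij_betw g V (insert (f u @ [False]) (insert (f u @ [True]) (leaves N - {f u})))"
  unfolding g_def
proof (rule bij_betw_fun_upd_split[OF f_bij])
  show "f u @ [False] \<notin> leaves N" "f u @ [True] \<notin> leaves N"
    using child_of_leaf_notin[OF old_tree f_u_leaf] leaves_subset by blast+
qed (use u v uv in auto)

lemma g_eq_iff: "x \<in> V \<Longrightarrow> y \<in> V \<Longrightarrow> g x = g y \<longleftrightarrow> x = y"
  using inj_on_eq_iff[OF bij_betw_imp_inj_on[OF g_bij]] .

lemma CA_Un_CB: "CA \<union> CB = g ` W"
  unfolding CA_def CB_def image_Un[symmetric] by (rule arg_cong[where f = "image g"]) blast

sublocale leaf_split N A B "f u" CA CB
proof
  show "signed_tree_model N A B" by (fact old_model)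
  show "f u \<in> leaves N" by (fact f_u_leaf)
  show "CA \<inter> CB = {}"
    using g_eq_iff W_subset by (auto simp: CA_def CB_def)
  have "g u \<in> CA \<union> CB" unfolding CA_Un_CB W_def by blast
  then show "f u @ [False] \<in> CA \<union> CB" by simp
  have "g w \<in> insert (f u @ [False]) (leaves N - {f u})" if "w \<in> W" for w
  proof (cases "w = u")
    case False
    then have "w \<in> V - {v}" "w \<noteq> u" using that W_subset by auto
    then show ?thesis using f_leaf f_eq_iff[of w u] u uv by auto
  qed simp
  then show "CA \<union> CB \<subseteq> insert (f u @ [False]) (leaves N - {f u})"
    unfolding CA_Un_CB by (rule image_subsetI)
qed

lemma g_bij_leaves: "bij_betw g V (leaves N')"
  using g_bij by (simp add: leaves_N')

lemma g_leaf: "x \<in> V \<Longrightarrow> g x \<in> leaves N'"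
  using g_bij_leaves by (auto simp: bij_betw_def)

lemma unsplit_g:
  assumes x: "x \<in> V - {v}"
  shows "unsplit (g x) = f x"
proof (cases "x = u")
  case False
  have "f x \<in> N" using f_leaf[OF x] leaves_subset by blast
  then have "f x \<noteq> L" "f x \<noteq> R" using children_notin_N by auto
  with False x show ?thesis by (simp add: unsplit_def)
qed (simp add: unsplit_def)

lemma unsplit_R: "unsplit R = f u"
  by (simp add: unsplit_def)

lemma adj_v_iff: "w \<in> V - {v} \<Longrightarrow> E v w \<longleftrightarrow> model_adj A' B' R (g w)"
proof (cases "w \<in> W")
  case True
  then show ?thesis
    using model_adj_new_blue not_model_adj_new_green by (cases "E v w") (auto simp: CA_def CB_def)
next
  case False
  assume w: "w \<in> V - {v}"
  with False have "w \<noteq> u" "w \<in> V - {u, v}" by (auto simp: W_def)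
  with False have "E v w \<longleftrightarrow> E u w" using D_iff by (auto simp: W_def)
  also have "\<dots> \<longleftrightarrow> model_adj A B (f u) (f w)"
    using f_adj u uv w \<open>w \<noteq> u\<close> by blast
  also have "\<dots> \<longleftrightarrow> model_adj A' B' R (g w)"
  proof -
    have "g w \<noteq> R" using g_eq_iff[of w v] w v by simp
    moreover have "g w \<notin> CA \<union> CB"
    proof
      assume "g w \<in> CA \<union> CB"
      then obtain w' where "w' \<in> W" "g w = g w'" unfolding CA_Un_CB by blast
      then have "w = w'" using g_eq_iff w W_subset by blast
      with False \<open>w' \<in> W\<close> show False by simp
    qed
    ultimately have "{R, g w} \<notin> star_pairs R (CA \<union> CB)" by (simp add: doubleton_in_star_pairs)
    then show ?thesis
      using model_adj_split_inherited[OF R_leaf g_leaf] w \<open>g w \<noteq> R\<close> unsplit_g unsplit_R by auto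
  qed
  finally show ?thesis .
qed

lemma adj_off_v_iff:
  assumes "x \<in> V - {v}" "y \<in> V - {v}" "x \<noteq> y"
  shows "E x y \<longleftrightarrow> model_adj A' B' (g x) (g y)"
proof -
  have "g x \<noteq> R" "g y \<noteq> R" "g x \<noteq> g y"
    using g_eq_iff[of x v] g_eq_iff[of y v] g_eq_iff[of x y] assms v by auto
  then have "{g x, g y} \<notin> star_pairs R (CA \<union> CB)"
    using star_pairs_contains_center[of "{g x, g y}" R "CA \<union> CB"] by auto
  then show ?thesis
    using model_adj_split_inherited[OF g_leaf g_leaf] f_adj assms unsplit_g \<open>g x \<noteq> g y\<close> by auto
qed

lemma admits_model_split: "admits_model V E N' A' B'"
  unfolding admits_model_def
proof (intro exI conjI ballI impI)
  show "bij_betw g V (leaves N')" by (fact g_bij_leaves)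
  fix x y assume "x \<in> V" "y \<in> V" "x \<noteq> y"
  then consider "x = v" | "y = v" | "x \<in> V - {v}" "y \<in> V - {v}" by blast
  then show "E x y \<longleftrightarrow> model_adj A' B' (g x) (g y)"
  proof cases
    case 1
    with \<open>y \<in> V\<close> \<open>x \<noteq> y\<close> have "y \<in> V - {v}" by blast
    then show ?thesis using adj_v_iff 1 by simp
  next
    case 2
    with \<open>x \<in> V\<close> \<open>x \<noteq> y\<close> have "x \<in> V - {v}" by blast
    then have "E v x \<longleftrightarrow> model_adj A' B' (g v) (g x)" using adj_v_iff by simp
    moreover have "E x y \<longleftrightarrow> E v x" using 2 sym by blast
    ultimately show ?thesis using 2 model_adj_commute[of A' B' "g x" "g v"] by simp
  next
    case 3
    then show ?thesis using adj_off_v_iff \<open>x \<noteq> y\<close> by blast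
  qed
qed

end

lemma clean_signed_tree_model_if_sdd_le:
  assumes "sdd_le V E d" and "\<And>x y. E x y \<Longrightarrow> E y x" and "\<And>x. \<not> E x x"
  shows "\<exists>N A B. signed_tree_model N A B \<and> clean N A B
           \<and> degeneracy_le N (A \<union> B) (d + 1) \<and> admits_model V E N A B"
  using assms
proof (induction rule: sdd_le.induct)
  case (single V E d)
  then obtain x where "V = {x}" by (auto simp: card_1_singleton_iff)
  moreover have "leaves {[]} = {[]}" by (simp add: leaves_def)
  ultimately have "admits_model V E {[]} {} {}"
    unfolding admits_model_def by (intro exI[of _ "\<lambda>_. []"]) (simp add: bij_betw_def)
  moreover have "signed_tree_model {[]} {} {}" "clean {[]} {} {}" "degeneracy_le {[]} ({} \<union> {}) (d + 1)"
    by (auto simp: signed_tree_model_def full_binary_tree_def clean_def degeneracy_le_def)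
  ultimately show ?case by blast
next
  case (step u V v E d)
  then obtain N A B f where old: "signed_tree_model N A B" "clean N A B"
      "degeneracy_le N (A \<union> B) (d + 1)" "bij_betw f (V - {v}) (leaves N)"
    and adj: "\<And>x y. x \<in> V - {v} \<Longrightarrow> y \<in> V - {v} \<Longrightarrow> x \<noteq> y \<Longrightarrow>
      E x y \<longleftrightarrow> model_adj A B (f x) (f y)"
    unfolding admits_model_def by blast
  interpret vertex_split V E u v N A B f
    using step.hyps step.prems old adj by unfold_locales auto
  have "card (CA \<union> CB) \<le> d + 1"
    using card_W step.hyps(4) card_image_le[of W g] finite_V W_subset finite_subset
    unfolding CA_Un_CB by fastforce
  then show ?case
    using signed_tree_model_split clean_split[OF old(2)] degeneracy_split[OF old(3)]
      admits_model_split by blast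
qed

text \<open>The hypothesis V \<noteq> {} is implied by sdd_le V E d.\<close>

theorem lemma3p1:
  fixes V :: "'a set" and E :: "'a \<Rightarrow> 'a \<Rightarrow> bool" and d :: nat
  assumes "graph V E" and "V \<noteq> {}" and "sdd_le V E d"
  shows "\<exists>N A B. signed_tree_model N A B \<and> clean N A B
           \<and> degeneracy_le N (A \<union> B) (d + 1) \<and> admits_model V E N A B"
  using clean_signed_tree_model_if_sdd_le[OF assms(3)] assms(1) unfolding graph_def by blast

end
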